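(* Suppose $\frac2{n+1}<R\le1$ and let $\ell_2=\min\{n,\lfloor n/R\rfloor\}$ (so here $\ell_2=n$). Then for every bid set $B_{\mathcal D}$ of $\mathcal D$ (a multiset of $n$ nonnegative reals with sum $\beta$), $$W(\pi_{\rm unif},B_{\mathcal D})\ge f(\ell_2).$$
   Context: Position-randomized auction with two bidders $\mathcal A$ and $\mathcal D$ and $n\ge1$ objects. $\mathcal D$ has budget $\beta>0$ and $\mathcal A$ has budget $R\beta$ with $R>0$. A bidding algorithm of a bidder is a pair $(\pi,B)$: $B$ (the bid set) is a multiset of $n$ nonnegative reals whose sum is at most the bidder's budget, and $\pi$ is a randomized algorithm permuting sequences of length $n$. Applying $\pi$ to a listing of $B$ gives the final bid sequence, whose $i$-th entry is the bid on object $i$. The two bidders' permutations are independent. Each object goes to the higher bid; on a tie each bidder wins it with probability $1/2$. $w(\pi_{\mathcal A},\pi_{\mathcal D},B_{\mathcal A},B_{\mathcal D})$ is the expected number of objects won by $\mathcal A$. $W(\pi_{\mathcal D},B_{\mathcal D})$ is its supremum over all bidding algorithms $(\pi_{\mathcal A},B_{\mathcal A})$ of $\mathcal A$. $\pi_{\rm unif}$ applies a uniformly random permutation. For $x,y>0$, $\mathrm{less}(x,y)=y(\lceil x/y\rceil-1)$. For $\ell=1,\dots,n$, let $R_\ell=\mathrm{less}(R,\frac2{\ell(\ell+1)})$ and $f(\ell)=n-\ell+\frac{\ell(\ell+1)R_\ell}{2n}$. *)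

theory Defs
  imports "HOL-Probability.Probability" "HOL-Combinatorics.Permutations"
begin

text \<open>A randomized permuting algorithm: maps an input sequence to a distribution
  over output sequences, each of which is a rearrangement of the input.\<close>
type_synonym perm_alg = "real list \<Rightarrow> real list pmf"

definition valid_perm_alg :: "nat \<Rightarrow> perm_alg \<Rightarrow> bool" where
  "valid_perm_alg n \<pi> \<longleftrightarrow>
     (\<forall>xs. length xs = n \<longrightarrow> set_pmf (\<pi> xs) \<subseteq> {ys. mset ys = mset xs})"

definition valid_bid_set :: "nat \<Rightarrow> real \<Rightarrow> real multiset \<Rightarrow> bool" where
  "valid_bid_set n budget B \<longleftrightarrow>
     size B = n \<and> (\<forall>x\<in>#B. 0 \<le> x) \<and> sum_mset B \<le> budget"

definition pi_unif :: perm_alg where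
  "pi_unif xs = map_pmf (\<lambda>\<sigma>. permute_list \<sigma> xs)
                  (pmf_of_set {\<sigma>. \<sigma> permutes {..<length xs}})"

definition final_bids :: "perm_alg \<Rightarrow> real multiset \<Rightarrow> real list pmf" where
  "final_bids \<pi> B = \<pi> (sorted_list_of_multiset B)"

definition wins :: "nat \<Rightarrow> real list \<Rightarrow> real list \<Rightarrow> real" where
  "wins n a d = (\<Sum>i<n. if a ! i > d ! i then 1 else if a ! i = d ! i then 1/2 else 0)"

definition w :: "nat \<Rightarrow> perm_alg \<Rightarrow> perm_alg \<Rightarrow> real multiset \<Rightarrow> real multiset \<Rightarrow> real" where
  "w n \<pi>A \<pi>D BA BD =
     measure_pmf.expectation (pair_pmf (final_bids \<pi>A BA) (final_bids \<pi>D BD))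
       (\<lambda>(a, d). wins n a d)"

definition W :: "nat \<Rightarrow> real \<Rightarrow> real \<Rightarrow> perm_alg \<Rightarrow> real multiset \<Rightarrow> real" where
  "W n R \<beta> \<pi>D BD =
     Sup {w n \<pi>A \<pi>D BA BD | \<pi>A BA. valid_perm_alg n \<pi>A \<and> valid_bid_set n (R * \<beta>) BA}"

definition less :: "real \<Rightarrow> real \<Rightarrow> real" where
  "less x y = y * (of_int \<lceil>x / y\<rceil> - 1)"

definition R_l :: "real \<Rightarrow> nat \<Rightarrow> real" where
  "R_l R l = less R (2 / (real l * (real l + 1)))"

definition f :: "nat \<Rightarrow> real \<Rightarrow> nat \<Rightarrow> real" where
  "f n R l = real n - real l + real l * (real l + 1) * R_l R l / (2 * real n)"

end

theory Submission
  imports Defs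
begin

(*
  Against a uniformly permuted bid list of D, a bid of A exceeding the j-th smallest bid d_j
  of D wins at least j/n objects in expectation.  So index j is worth j objects at price d_j,
  and as d_0 + ... + d_n = beta and 0 + ... + n = n(n+1)/2, the average price per object is
  2 beta / (n(n+1)).  It suffices to find at most n indices of total worth
  k = ceil(R n(n+1)/2) - 1 whose total price is at most k times the average price, which is
  less than R beta: then A wins k/n = f(n) objects.  Averaging over all pairs (i, s - i) with
  a fixed sum s gives pairs that are no more expensive than the average; k is covered by pairs
  of worth n + 1 and a remainder pair, or, when n is odd and the remainder does not fit, by a
  triple of worth 3(n+1)/2 found by averaging in the same way.
*)

section \<open>Cheap index lists\<close>

lemma exists_le_average:
  fixes g :: "'a \<Rightarrow> real"
  assumes "finite A" "A \<noteq> {}"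
  shows "\<exists>x\<in>A. real (card A) * g x \<le> (\<Sum>y\<in>A. g y)"
proof -
  obtain x where "x \<in> A" and "\<forall>y\<in>A. g x \<le> g y"
    using arg_min_if_finite[OF assms, of g] by (metis not_le)
  then show ?thesis
    using sum_bounded_below[of A "g x" g] by auto
qed

lemma exists_pair_le_average:
  fixes d :: "nat \<Rightarrow> real"
  assumes "a \<le> b"
  shows "\<exists>i\<in>{a..b}. real (b + 1 - a) * (d i + d (a + b - i)) \<le> 2 * (\<Sum>j=a..b. d j)"
proof -
  have "(\<Sum>i=a..b. d i + d (a + b - i)) = 2 * (\<Sum>j=a..b. d j)"
    using sum.atLeastAtMost_rev[of d a b] by (simp add: sum.distrib add.commute)
  then show ?thesis
    using exists_le_average[of "{a..b}" "\<lambda>i. d i + d (a + b - i)"] assms by simp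
qed

lemma exists_triple_le_average:
  fixes d :: "nat \<Rightarrow> real"
  assumes n: "n = 2 * a + 1"
  shows "\<exists>i\<in>{1..n}. \<exists>j\<in>{1..n}. \<exists>l\<in>{1..n}.
           i + j + l = 3 * (a + 1) \<and> real n * (d i + d j + d l) \<le> 3 * (\<Sum>m=1..n. d m)"
proof -
  define y where "y x = (if x \<le> a + 1 then x + a else x - a - 1)" for x
  define z where "z x = (if x \<le> a + 1 then 2 * a + 3 - 2 * x else 4 * a + 4 - 2 * x)" for x
  \<comment> \<open>\<open>y\<close> and \<open>z\<close> permute \<open>{1..n}\<close>, and \<open>x + y x + z x = 3 (a + 1)\<close> for every \<open>x\<close>.\<close>
  have "inj_on y {1..n}" "y ` {1..n} \<subseteq> {1..n}"
    unfolding y_def n inj_on_def by auto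
  then have y_sum: "(\<Sum>x=1..n. d (y x)) = (\<Sum>x=1..n. d x)"
    using sum.reindex[of y "{1..n}" d] endo_inj_surj[of "{1..n}" y] by simp
  have "inj_on z {1..n}" "z ` {1..n} \<subseteq> {1..n}"
    unfolding z_def n inj_on_def by (auto, presburger+)
  then have z_sum: "(\<Sum>x=1..n. d (z x)) = (\<Sum>x=1..n. d x)"
    using sum.reindex[of z "{1..n}" d] endo_inj_surj[of "{1..n}" z] by simp
  obtain x where x: "x \<in> {1..n}" "real n * (d x + d (y x) + d (z x)) \<le> 3 * (\<Sum>m=1..n. d m)"
    using exists_le_average[of "{1..n}" "\<lambda>x. d x + d (y x) + d (z x)"] y_sum z_sum n
    by (auto simp: sum.distrib)
  moreover have "y x \<in> {1..n}" "z x \<in> {1..n}" "x + y x + z x = 3 * (a + 1)"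
    using x(1) unfolding y_def z_def n by auto
  ultimately show ?thesis by blast
qed

text \<open>With \<open>d 0 = 0\<close> this is the price of all indices \<open>0..n\<close> divided by their total worth
  \<open>n (n + 1) / 2\<close>.\<close>
definition avg_price :: "(nat \<Rightarrow> real) \<Rightarrow> nat \<Rightarrow> real" where
  "avg_price d n = 2 * (\<Sum>j=1..n. d j) / (real n * (real n + 1))"

definition cheap :: "(nat \<Rightarrow> real) \<Rightarrow> nat \<Rightarrow> nat list \<Rightarrow> bool" where
  "cheap d n xs \<longleftrightarrow> set xs \<subseteq> {..n} \<and> sum_list (map d xs) \<le> real (sum_list xs) * avg_price d n"

lemma cheap_append:
  "cheap d n xs \<Longrightarrow> cheap d n ys \<Longrightarrow> cheap d n (xs @ ys)"
  unfolding cheap_def by (auto simp: distrib_right)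

lemma cheap_concat_replicate:
  assumes "cheap d n xs"
  shows "cheap d n (concat (replicate a xs))"
proof (induction a)
  case 0
  then show ?case by (simp add: cheap_def)
next
  case (Suc a)
  then show ?case using cheap_append[OF assms] by simp
qed

lemma sum_list_concat_replicate:
  "sum_list (concat (replicate a xs)) = a * sum_list xs"
  "length (concat (replicate a xs)) = a * length xs"
  by (induction a) auto

lemma avg_price_scaled:
  assumes "n \<ge> 1"
  shows "real n * (real n + 1) * avg_price d n = 2 * (\<Sum>j=1..n. d j)"
  using assms by (simp add: avg_price_def)

lemma exists_cheap_pair:
  assumes "n \<ge> 1"
  shows "\<exists>i j. cheap d n [i, j] \<and> i + j = n + 1"
proof -
  obtain i where i: "i \<in> {1..n}" "real n * (d i + d (n + 1 - i)) \<le> 2 * (\<Sum>j=1..n. d j)"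
    using exists_pair_le_average[of 1 n d] assms by auto
  moreover have "2 * (\<Sum>j=1..n. d j) = real n * (real (n + 1) * avg_price d n)"
    using avg_price_scaled[OF assms, of d] by (simp add: mult.assoc add.commute)
  ultimately have "real n * (d i + d (n + 1 - i)) \<le> real n * (real (n + 1) * avg_price d n)"
    by linarith
  then have "d i + d (n + 1 - i) \<le> real (n + 1) * avg_price d n"
    using assms by simp
  then show ?thesis
    using i(1) by (intro exI[of _ i] exI[of _ "n + 1 - i"]) (auto simp: cheap_def)
qed

lemma exists_cheap_triple:
  assumes n: "n = 2 * a + 1"
  shows "\<exists>xs. cheap d n xs \<and> sum_list xs = 3 * (a + 1) \<and> length xs = 3"
proof -
  obtain i j l where ijl: "i \<in> {1..n}" "j \<in> {1..n}" "l \<in> {1..n}" "i + j + l = 3 * (a + 1)"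
    and cost: "real n * (d i + d j + d l) \<le> 3 * (\<Sum>m=1..n. d m)"
    using exists_triple_le_average[OF n] by blast
  have "3 * (\<Sum>m=1..n. d m) = real n * (real (3 * (a + 1)) * avg_price d n)"
    using avg_price_scaled[of n d] n by (simp add: algebra_simps)
  with cost have "d i + d j + d l \<le> real (3 * (a + 1)) * avg_price d n"
    using n by simp
  then show ?thesis
    using ijl by (intro exI[of _ "[i, j, l]"]) (auto simp: cheap_def add.assoc)
qed

lemma exists_lower_remainder:
  assumes "d 0 = 0"
  shows "\<exists>xs. set xs \<subseteq> {..r} \<and> sum_list xs = r \<and> length xs \<le> (if r \<le> 1 then 1 else 2)
              \<and> real (r + 1) * sum_list (map d xs) \<le> 2 * (\<Sum>j=0..r. d j)"
proof (cases "r \<le> 1")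
  case True
  then have "real (r + 1) * d r \<le> 2 * (\<Sum>j=0..r. d j)"
    using assms by (cases r) auto
  then show ?thesis using True by (intro exI[of _ "[r]"]) simp
next
  case False
  obtain i where "i \<in> {0..r}" "real (r + 1) * (d i + d (r - i)) \<le> 2 * (\<Sum>j=0..r. d j)"
    using exists_pair_le_average[of 0 r d] by auto
  then show ?thesis using False by (intro exI[of _ "[i, r - i]"]) auto
qed

lemma weighted_sum_le_imp_le_or_le:
  fixes p q x y s t :: real
  assumes "0 < p" "0 < q" "p * x + q * y \<le> p * s + q * t"
  shows "x \<le> s \<or> y \<le> t"
proof (rule ccontr)
  assume "\<not> (x \<le> s \<or> y \<le> t)"
  then have "p * s < p * x" "q * t < q * y"
    using assms(1,2) by simp_all
  with assms(3) show False by linarith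
qed

lemma remainder_targets_sum:
  fixes c :: real
  assumes "n = r + m"
  shows "real (r + 1) * (real r * c) + real m * (real (n + 1 + r) * c) = real n * (real n + 1) * c"
  using assms by (simp add: algebra_simps)

lemma exists_cheap_remainder:
  assumes d0: "d 0 = 0" and n: "n \<ge> 1" and r: "r \<le> n"
  shows "\<exists>xs. cheap d n xs \<and>
           (sum_list xs = r \<and> length xs \<le> (if r \<le> 1 then 1 else 2) \<or>
            r < n \<and> sum_list xs = n + 1 + r \<and> length xs = 2)"
proof -
  define D where "D = (\<Sum>j=0..r. d j)"
  define \<beta> where "\<beta> = (\<Sum>j=1..n. d j)"
  define c where "c = avg_price d n"
  have \<beta>_split: "\<beta> = D + (\<Sum>j=r+1..n. d j)"
  proof -
    have "{0..n} = {0..r} \<union> {r+1..n}" using r by auto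
    then have "(\<Sum>j=0..n. d j) = D + (\<Sum>j=r+1..n. d j)"
      unfolding D_def by (simp add: sum.union_disjoint)
    moreover have "(\<Sum>j=0..n. d j) = \<beta>"
      unfolding \<beta>_def using d0 by (simp add: sum.atLeast_Suc_atMost)
    ultimately show ?thesis by simp
  qed
  obtain lo where lo: "set lo \<subseteq> {..r}" "sum_list lo = r" "length lo \<le> (if r \<le> 1 then 1 else 2)"
    and lo_cost: "real (r + 1) * sum_list (map d lo) \<le> 2 * D"
    using exists_lower_remainder[of d r, OF d0] unfolding D_def by blast
  have lo_cheap: "cheap d n lo" if "sum_list (map d lo) \<le> real r * c"
    using that lo r unfolding cheap_def c_def by auto
  show ?thesis
  proof (cases "r = n")
    case True
    then have "real (r + 1) * sum_list (map d lo) \<le> real (r + 1) * (real r * c)"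
      using lo_cost \<beta>_split avg_price_scaled[OF n, of d]
      unfolding c_def \<beta>_def by (simp add: algebra_simps)
    then show ?thesis using lo lo_cheap by auto
  next
    case False
    with r have "r < n" by simp
    then obtain m where m: "n = r + m" "m > 0" using less_imp_add_positive by blast
    obtain i where i: "i \<in> {r+1..n}"
      "real m * (d i + d (n + 1 + r - i)) \<le> 2 * (\<Sum>j=r+1..n. d j)"
      using exists_pair_le_average[of "r + 1" n d] m by (auto simp: ac_simps)
    \<comment> \<open>Weighted by \<open>r + 1\<close> and \<open>n - r\<close>, the target costs of the lower and the upper
      remainder add up to exactly \<open>2 \<beta>\<close>, so one of the two meets its target.\<close>
    have "real (r + 1) * (real r * c) + real m * (real (n + 1 + r) * c) = 2 * \<beta>"
      using remainder_targets_sum[OF m(1), of c] avg_price_scaled[OF n, of d]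
      unfolding c_def \<beta>_def by simp
    then have weighted: "real (r + 1) * sum_list (map d lo) + real m * (d i + d (n + 1 + r - i))
        \<le> real (r + 1) * (real r * c) + real m * (real (n + 1 + r) * c)"
      using i(2) lo_cost \<beta>_split by linarith
    have "sum_list (map d lo) \<le> real r * c \<or> d i + d (n + 1 + r - i) \<le> real (n + 1 + r) * c"
      using weighted_sum_le_imp_le_or_le[OF _ _ weighted] m(2) by simp
    then show ?thesis
    proof
      assume "sum_list (map d lo) \<le> real r * c"
      then show ?thesis using lo lo_cheap by auto
    next
      assume "d i + d (n + 1 + r - i) \<le> real (n + 1 + r) * c"
      then show ?thesis
        using i(1) m unfolding c_def cheap_def by (intro exI[of _ "[i, n + 1 + r - i]"]) auto
    qed
  qed
qed

lemma exists_cheap_list_div_mod: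
  assumes d0: "d 0 = 0" and n: "n \<ge> 1" and r: "r \<le> n" and a: "1 \<le> a \<or> r = n"
  shows "\<exists>xs. cheap d n xs \<and> sum_list xs = a * (n + 1) + r
               \<and> length xs \<le> 2 * a + (if r \<le> 1 then 1 else 2)"
proof -
  obtain i j where pair: "cheap d n [i, j]" "i + j = n + 1"
    using exists_cheap_pair[OF n] by blast
  obtain rest where rest: "cheap d n rest"
    and rest_cases: "sum_list rest = r \<and> length rest \<le> (if r \<le> 1 then 1 else 2) \<or>
                     r < n \<and> sum_list rest = n + 1 + r \<and> length rest = 2"
    using exists_cheap_remainder[of d, OF d0 n r] by blast
  from rest_cases show ?thesis
  proof
    assume "sum_list rest = r \<and> length rest \<le> (if r \<le> 1 then 1 else 2)"
    then show ?thesis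
      using pair rest cheap_append[OF cheap_concat_replicate[OF pair(1)] rest]
      by (intro exI[of _ "concat (replicate a [i, j]) @ rest"])
        (simp add: sum_list_concat_replicate)
  next
    assume rest_up: "r < n \<and> sum_list rest = n + 1 + r \<and> length rest = 2"
    with a obtain b where b: "a = b + 1" by (metis add.commute le_Suc_ex less_irrefl)
    show ?thesis
      using pair rest rest_up cheap_append[OF cheap_concat_replicate[OF pair(1)] rest]
      unfolding b by (intro exI[of _ "concat (replicate b [i, j]) @ rest"])
        (simp add: sum_list_concat_replicate)
  qed
qed

lemma exists_cheap_list:
  assumes d0: "d 0 = 0" and n: "n \<ge> 2" and k: "n \<le> k" "2 * (k + 1) \<le> n * (n + 1)"
  shows "\<exists>xs. cheap d n xs \<and> sum_list xs = k \<and> length xs \<le> n"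
proof -
  define a where "a = k div (n + 1)"
  define r where "r = k mod (n + 1)"
  have k_eq: "k = a * (n + 1) + r" unfolding a_def r_def by (rule div_mult_mod_eq[symmetric])
  have r: "r \<le> n" unfolding r_def using mod_less_divisor[of "n + 1" k] by linarith
  have a_or_r: "1 \<le> a \<or> r = n" using k_eq k(1) r by (cases a) auto
  have "2 * a * (n + 1) < n * (n + 1)" using k(2) k_eq by (simp add: algebra_simps)
  then have a_n: "2 * a < n" by (metis mult_less_cancel2)
  show ?thesis
  proof (cases "r \<le> 1 \<or> 2 * a + 2 \<le> n")
    case True
    obtain xs where xs: "cheap d n xs" "sum_list xs = k"
      "length xs \<le> 2 * a + (if r \<le> 1 then 1 else 2)"
      using exists_cheap_list_div_mod[of d n r a, OF d0 _ r a_or_r] n k_eq by auto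
    moreover have "length xs \<le> n" using xs(3) True a_n by (auto split: if_splits)
    ultimately show ?thesis by blast
  next
    case False
    \<comment> \<open>No room for a remainder pair: two pairs, worth \<open>2 (n + 1) = 3 (a + 1) + (a + 1)\<close>, are
      traded for a triple and a remainder raised by \<open>a + 1\<close>, which saves one index.\<close>
    then have r2: "r \<ge> 2" and n_odd: "n = 2 * a + 1" using a_n by auto
    have "r \<le> a" using k(2) k_eq n_odd by (simp add: algebra_simps)
    then obtain b where b: "a = b + 2" using r2 by (metis add.commute le_Suc_ex le_trans numeral_2_eq_2)
    have "1 \<le> b \<or> a + 1 + r = n" using b n_odd \<open>r \<le> a\<close> r2 by auto
    then obtain xs where xs: "cheap d n xs" "sum_list xs = b * (n + 1) + (a + 1 + r)"
      "length xs \<le> 2 * b + 2"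
      using exists_cheap_list_div_mod[of d n "a + 1 + r" b, OF d0] n n_odd \<open>r \<le> a\<close> r2 by auto
    obtain ys where ys: "cheap d n ys" "sum_list ys = 3 * (a + 1)" "length ys = 3"
      using exists_cheap_triple[OF n_odd] by blast
    show ?thesis
      using cheap_append[OF xs(1) ys(1)] xs ys k_eq n_odd unfolding b
      by (intro exI[of _ "xs @ ys"]) (simp add: algebra_simps)
  qed
qed

section \<open>Uniformly random permutations\<close>

lemma card_permutes_apply_eq:
  assumes "i \<in> S" "t \<in> S"
  shows "card {\<sigma>. \<sigma> permutes S \<and> \<sigma> i = t} = card {\<sigma>. \<sigma> permutes S \<and> \<sigma> i = i}"
proof -
  let ?swap = "\<lambda>\<sigma>. Transposition.transpose i t \<circ> \<sigma>"
  have swap: "Transposition.transpose i t permutes S"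
    using assms by (rule permutes_swap_id)
  have "bij_betw ?swap {\<sigma>. \<sigma> permutes S \<and> \<sigma> i = i} {\<sigma>. \<sigma> permutes S \<and> \<sigma> i = t}"
    by (rule bij_betw_byWitness[where f' = ?swap])
      (use swap in \<open>auto simp: fun_eq_iff intro: permutes_compose\<close>)
  then show ?thesis by (rule bij_betw_same_card[symmetric])
qed

lemma expectation_permutes_apply:
  fixes h :: "'a \<Rightarrow> real"
  assumes S: "finite S" and i: "i \<in> S"
  shows "measure_pmf.expectation (pmf_of_set {\<sigma>. \<sigma> permutes S}) (\<lambda>\<sigma>. h (\<sigma> i))
           = (\<Sum>t\<in>S. h t) / card S"
proof -
  define P where "P = {\<sigma>. \<sigma> permutes S}"
  define c where "c = card {\<sigma>. \<sigma> permutes S \<and> \<sigma> i = i}"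
  have P: "finite P" "P \<noteq> {}"
    unfolding P_def using finite_permutations[OF S] permutes_id by blast+
  have fibers: "(\<Sum>\<sigma>\<in>P. g (\<sigma> i)) = c * (\<Sum>t\<in>S. g t)" for g :: "'a \<Rightarrow> real"
  proof -
    have "(\<lambda>\<sigma>. \<sigma> i) ` P \<subseteq> S"
      unfolding P_def using i by (auto simp: permutes_in_image)
    then have "(\<Sum>\<sigma>\<in>P. g (\<sigma> i)) = (\<Sum>t\<in>S. \<Sum>\<sigma>\<in>{\<sigma> \<in> P. \<sigma> i = t}. g (\<sigma> i))"
      by (rule sum.group[OF P(1) S, symmetric])
    also have "\<dots> = (\<Sum>t\<in>S. c * g t)"
    proof (rule sum.cong[OF refl])
      fix t assume "t \<in> S"
      then have "card {\<sigma> \<in> P. \<sigma> i = t} = c"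
        unfolding P_def c_def using card_permutes_apply_eq[OF i] by simp
      then show "(\<Sum>\<sigma>\<in>{\<sigma> \<in> P. \<sigma> i = t}. g (\<sigma> i)) = c * g t" by simp
    qed
    finally show ?thesis by (simp add: sum_distrib_left)
  qed
  have "c > 0"
  proof -
    have "id \<in> {\<sigma>. \<sigma> permutes S \<and> \<sigma> i = i}" by (simp add: permutes_id)
    moreover have "finite {\<sigma>. \<sigma> permutes S \<and> \<sigma> i = i}"
      using finite_permutations[OF S] by (rule finite_subset[rotated]) auto
    ultimately show ?thesis unfolding c_def using card_gt_0_iff by blast
  qed
  then show ?thesis
    using fibers[of h] fibers[of "\<lambda>_. 1"] integral_pmf_of_set[OF P(2,1)]
    unfolding P_def by simp
qed

section \<open>The bidding strategy\<close>

lemma length_sorted_list_of_multiset [simp]: "length (sorted_list_of_multiset B) = size B"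
  by (metis mset_sorted_list_of_multiset size_mset)

lemma sum_mset_conv_sorted_nth:
  "(\<Sum>x\<in>#B. g x) = (\<Sum>i<size B. g (sorted_list_of_multiset B ! i))"
proof -
  define L where "L = sorted_list_of_multiset B"
  have "(\<Sum>x\<in>#B. g x) = sum_list (map g L)"
    unfolding L_def by (metis mset_map mset_sorted_list_of_multiset sum_mset_sum_list)
  also have "\<dots> = (\<Sum>i<length L. g (L ! i))"
    by (simp add: sum_list_sum_nth lessThan_atLeast0)
  finally show ?thesis
    unfolding L_def by simp
qed

definition win_share :: "real \<Rightarrow> real \<Rightarrow> real" where
  "win_share x y = (if y < x then 1 else if x = y then 1 / 2 else 0)"

lemma win_share_nonneg: "0 \<le> win_share x y"
  by (simp add: win_share_def)

lemma sum_win_share_nonneg: "0 \<le> (\<Sum>b\<in>#B. win_share a b)"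
  by (induction B) (auto intro: add_nonneg_nonneg win_share_nonneg)

lemma w_return_pi_unif:
  assumes BA: "size BA = n" and BD: "size BD = n"
  shows "w n (\<lambda>xs. return_pmf xs) pi_unif BA BD = (\<Sum>a\<in>#BA. \<Sum>b\<in>#BD. win_share a b) / n"
proof -
  define as where "as = sorted_list_of_multiset BA"
  define L where "L = sorted_list_of_multiset BD"
  define P where "P = pmf_of_set {\<sigma>. \<sigma> permutes {..<n}}"
  have len: "length as = n" "length L = n"
    unfolding as_def L_def using BA BD by simp_all
  have set_P: "set_pmf P = {\<sigma>. \<sigma> permutes {..<n}}"
    unfolding P_def using permutes_id[of "{..<n}"] finite_permutations[of "{..<n}"]
    by (intro set_pmf_of_set) blast+
  have "w n (\<lambda>xs. return_pmf xs) pi_unif BA BD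
      = measure_pmf.expectation P (\<lambda>\<sigma>. wins n as (permute_list \<sigma> L))"
    unfolding w_def final_bids_def pi_unif_def P_def as_def[symmetric] L_def[symmetric] len
    by (simp add: pair_return_pmf1)
  also have "\<dots> = measure_pmf.expectation P (\<lambda>\<sigma>. \<Sum>i<n. win_share (as ! i) (L ! \<sigma> i))"
    by (rule integral_cong_AE)
      (auto intro!: AE_pmfI sum.cong simp: set_P wins_def win_share_def permute_list_nth len)
  also have "\<dots> = (\<Sum>i<n. measure_pmf.expectation P (\<lambda>\<sigma>. win_share (as ! i) (L ! \<sigma> i)))"
    by (rule Bochner_Integration.integral_sum)
      (simp add: integrable_measure_pmf_finite set_P finite_permutations)
  also have "\<dots> = (\<Sum>i<n. (\<Sum>t<n. win_share (as ! i) (L ! t)) / n)"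
  proof (rule sum.cong[OF refl])
    fix i assume "i \<in> {..<n}"
    then show "measure_pmf.expectation P (\<lambda>\<sigma>. win_share (as ! i) (L ! \<sigma> i))
        = (\<Sum>t<n. win_share (as ! i) (L ! t)) / n"
      using expectation_permutes_apply[of "{..<n}" i "\<lambda>t. win_share (as ! i) (L ! t)"]
      unfolding P_def by simp
  qed
  finally show ?thesis
    unfolding as_def L_def
    by (simp add: sum_mset_conv_sorted_nth BA BD sum_divide_distrib)
qed

text \<open>Counting from 1; index 0 stands for the zero bid.\<close>
definition nth_smallest :: "real multiset \<Rightarrow> nat \<Rightarrow> real" where
  "nth_smallest B j = (if j = 0 then 0 else sorted_list_of_multiset B ! (j - 1))"

lemma nth_smallest_0 [simp]: "nth_smallest B 0 = 0"
  by (simp add: nth_smallest_def)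

lemma nth_smallest_nonneg:
  assumes "\<forall>b\<in>#B. 0 \<le> b" "j \<le> size B"
  shows "0 \<le> nth_smallest B j"
proof (cases "j = 0")
  case False
  then have "sorted_list_of_multiset B ! (j - 1) \<in># B"
    using assms(2) nth_mem[of "j - 1" "sorted_list_of_multiset B"] by simp
  then show ?thesis using assms(1) False by (simp add: nth_smallest_def)
qed simp

lemma sum_nth_smallest: "(\<Sum>j=1..size B. nth_smallest B j) = (\<Sum>b\<in>#B. b)"
proof -
  have "(\<Sum>j=1..size B. nth_smallest B j) = (\<Sum>i<size B. nth_smallest B (Suc i))"
    by (simp add: sum.atLeast1_atMost_eq)
  then show ?thesis
    using sum_mset_conv_sorted_nth[of "\<lambda>x. x" B] by (simp add: nth_smallest_def)
qed

lemma le_sum_win_share: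
  assumes j: "j \<le> size B" and a: "nth_smallest B j < a"
  shows "real j \<le> (\<Sum>b\<in>#B. win_share a b)"
proof -
  define L where "L = sorted_list_of_multiset B"
  have below: "y < a" if y: "y \<in> set (take j L)" for y
  proof -
    obtain t where "t < length (take j L)" "y = take j L ! t"
      using y unfolding in_set_conv_nth by blast
    then have t: "t < j" "y = L ! t" by auto
    have "L ! t \<le> L ! (j - 1)"
      using t(1) j unfolding L_def by (intro sorted_nth_mono) auto
    then show "y < a" using a t unfolding nth_smallest_def L_def by simp
  qed
  have "(\<Sum>b\<in>#B. win_share a b) = sum_list (map (win_share a) L)"
    unfolding L_def by (metis mset_map mset_sorted_list_of_multiset sum_mset_sum_list)
  also have "\<dots> = sum_list (map (win_share a) (take j L)) + sum_list (map (win_share a) (drop j L))"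
    by (metis append_take_drop_id map_append sum_list_append)
  also have "map (win_share a) (take j L) = map (\<lambda>_. 1) (take j L)"
    using below by (simp add: win_share_def)
  also have "sum_list (map (\<lambda>_. 1) (take j L)) = real j"
    using j unfolding L_def by (simp add: sum_list_triv)
  finally show ?thesis
    using sum_list_nonneg[of "map (win_share a) (drop j L)"] win_share_nonneg by auto
qed

text \<open>Index \<open>x\<close> becomes a bid just above the \<open>x\<close> smallest bids of D; the remaining
  objects get the bid 0.\<close>
definition overbids :: "real multiset \<Rightarrow> real \<Rightarrow> nat \<Rightarrow> nat list \<Rightarrow> real multiset" where
  "overbids BD \<epsilon> n xs = mset (map (\<lambda>x. nth_smallest BD x + \<epsilon>) xs @ replicate (n - length xs) 0)"

lemma valid_overbids:
  assumes BD: "size BD = n" "\<forall>b\<in>#BD. 0 \<le> b" and xs: "set xs \<subseteq> {..n}" "length xs \<le> n"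
    and \<epsilon>: "0 \<le> \<epsilon>" "sum_list (map (nth_smallest BD) xs) + real n * \<epsilon> \<le> budget"
  shows "valid_bid_set n budget (overbids BD \<epsilon> n xs)"
  unfolding valid_bid_set_def
proof (intro conjI)
  show "size (overbids BD \<epsilon> n xs) = n" unfolding overbids_def using xs(2) by simp
  have "0 \<le> nth_smallest BD x + \<epsilon>" if "x \<in> set xs" for x
    using nth_smallest_nonneg[of BD x] that xs(1) BD \<epsilon>(1) by auto
  then show "\<forall>x\<in>#overbids BD \<epsilon> n xs. 0 \<le> x"
    unfolding overbids_def by auto
  have "sum_mset (overbids BD \<epsilon> n xs) = sum_list (map (nth_smallest BD) xs) + real (length xs) * \<epsilon>"
    unfolding overbids_def sum_mset_sum_list
    by (simp add: sum_list_addf sum_list_triv sum_list_replicate)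
  also have "\<dots> \<le> budget"
    using xs(2) \<epsilon> mult_right_mono[of "real (length xs)" "real n" \<epsilon>] by simp
  finally show "sum_mset (overbids BD \<epsilon> n xs) \<le> budget" .
qed

lemma le_w_overbids:
  assumes BD: "size BD = n" and xs: "set xs \<subseteq> {..n}" "length xs \<le> n" and \<epsilon>: "0 < \<epsilon>"
  shows "real (sum_list xs) / n \<le> w n (\<lambda>ys. return_pmf ys) pi_unif (overbids BD \<epsilon> n xs) BD"
proof -
  define bids where "bids = map (\<lambda>x. nth_smallest BD x + \<epsilon>) xs @ replicate (n - length xs) 0"
  define G where "G a = (\<Sum>b\<in>#BD. win_share a b)" for a
  have "real (sum_list xs) = sum_list (map real xs)" by (simp add: sum_list_of_nat)
  also have "\<dots> \<le> sum_list (map (\<lambda>x. G (nth_smallest BD x + \<epsilon>)) xs)"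
    using xs(1) BD \<epsilon> unfolding G_def by (intro sum_list_mono le_sum_win_share) auto
  also have "\<dots> \<le> sum_list (map G bids)"
    unfolding bids_def G_def using sum_win_share_nonneg by (simp add: sum_list_replicate o_def)
  also have "\<dots> = (\<Sum>a\<in>#overbids BD \<epsilon> n xs. G a)"
    unfolding overbids_def bids_def[symmetric] by (metis mset_map sum_mset_sum_list)
  finally show ?thesis
    using w_return_pi_unif[of "overbids BD \<epsilon> n xs" n BD] BD xs(2)
    unfolding G_def by (simp add: overbids_def divide_right_mono)
qed

lemma exists_bid_set_winning:
  assumes "size BD = n" "\<forall>b\<in>#BD. 0 \<le> b" "set xs \<subseteq> {..n}" "length xs \<le> n"
    and cost: "sum_list (map (nth_smallest BD) xs) < budget"
  shows "\<exists>BA. valid_bid_set n budget BA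
              \<and> real (sum_list xs) / n \<le> w n (\<lambda>ys. return_pmf ys) pi_unif BA BD"
proof -
  define \<epsilon> where "\<epsilon> = (budget - sum_list (map (nth_smallest BD) xs)) / (n + 1)"
  have "0 < \<epsilon>" unfolding \<epsilon>_def using cost by simp
  moreover have "sum_list (map (nth_smallest BD) xs) + real n * \<epsilon> \<le> budget"
    using cost unfolding \<epsilon>_def by (simp add: field_simps)
  ultimately show ?thesis
    using valid_overbids[of BD n xs \<epsilon> budget] le_w_overbids[of BD n xs \<epsilon>] assms by auto
qed

lemma w_le_W:
  assumes "valid_perm_alg n \<pi>A" "valid_bid_set n (R * \<beta>) BA"
  shows "w n \<pi>A \<pi>D BA BD \<le> W n R \<beta> \<pi>D BD"
proof -
  have wins_bounds: "0 \<le> wins n a d \<and> wins n a d \<le> n" for a d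
  proof
    show "0 \<le> wins n a d" unfolding wins_def by (intro sum_nonneg) auto
    have "wins n a d \<le> (\<Sum>i<n. 1)" unfolding wins_def by (intro sum_mono) auto
    then show "wins n a d \<le> n" by simp
  qed
  have "w n \<pi>A' \<pi>D BA' BD \<le> n" for \<pi>A' BA'
  proof -
    let ?M = "pair_pmf (final_bids \<pi>A' BA') (final_bids \<pi>D BD)"
    have "integrable (measure_pmf ?M) (\<lambda>(a, d). wins n a d)"
      by (rule measure_pmf.integrable_const_bound[where B = n]) (use wins_bounds in auto)
    then show ?thesis
      unfolding w_def by (rule measure_pmf.integral_le_const) (use wins_bounds in auto)
  qed
  then have "bdd_above {w n \<pi>A \<pi>D BA BD | \<pi>A BA. valid_perm_alg n \<pi>A \<and> valid_bid_set n (R * \<beta>) BA}"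
    by (intro bdd_aboveI) blast
  then show ?thesis
    unfolding W_def using assms by (intro cSup_upper) blast+
qed

lemma f_diagonal:
  assumes "n \<ge> 1"
  shows "f n R n = (of_int \<lceil>R * (real n * (real n + 1)) / 2\<rceil> - 1) / n"
proof -
  define m where "m = real n * (real n + 1)"
  have "m > 0" "real n > 0" unfolding m_def using assms by simp_all
  then show ?thesis
    unfolding f_def R_l_def less_def m_def[symmetric] by (simp add: field_simps)
qed

lemma triangular_ceiling_bounds:
  assumes "n \<ge> 1" "2 / (real n + 1) < R" "R \<le> 1"
  defines "k \<equiv> nat (\<lceil>R * (real n * (real n + 1)) / 2\<rceil> - 1)"
  shows "n \<le> k" "real k < R * (real n * (real n + 1)) / 2" "2 * (k + 1) \<le> n * (n + 1)"
proof -
  define X where "X = R * (real n * (real n + 1)) / 2"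
  have "2 < R * (real n + 1)" using assms(2) by (simp add: field_simps)
  then have "2 * real n < R * (real n + 1) * real n"
    using assms(1) by (intro mult_strict_right_mono) auto
  then have "real n < X"
    unfolding X_def by (simp add: algebra_simps)
  then show "n \<le> k" "real k < X"
    unfolding k_def X_def by linarith+
  moreover have "X \<le> real n * (real n + 1) / 2"
    unfolding X_def using mult_right_mono[OF assms(3), of "real n * (real n + 1)"] by simp
  ultimately have "real (2 * k) < real (n * (n + 1))"
    unfolding of_nat_mult of_nat_add of_nat_1 of_nat_numeral by linarith
  then have "2 * k < n * (n + 1)" by (simp only: of_nat_less_iff)
  moreover have "even (n * (n + 1))" by simp
  ultimately show "2 * (k + 1) \<le> n * (n + 1)" by presburger
qed

lemma f_eq_ceiling:
  assumes "n \<ge> 1" "0 < R" "R \<le> 1"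
  shows "f n R (min n (nat \<lfloor>real n / R\<rfloor>)) = real (nat (\<lceil>R * (real n * (real n + 1)) / 2\<rceil> - 1)) / n"
proof -
  have "real n \<le> real n / R" using assms by (simp add: le_divide_eq)
  then have "min n (nat \<lfloor>real n / R\<rfloor>) = n" by linarith
  moreover have "0 < R * (real n * (real n + 1)) / 2" using assms by simp
  ultimately show ?thesis using f_diagonal[OF assms(1)] by simp
qed

lemma cheap_nth_smallest_cost_less:
  assumes "cheap (nth_smallest B) n xs" "size B = n" "n \<ge> 1" "0 < sum_mset B"
    and "2 * real (sum_list xs) < R * (real n * (real n + 1))"
  shows "sum_list (map (nth_smallest B) xs) < R * sum_mset B"
proof -
  define m where "m = real n * (real n + 1)"
  have m: "m > 0" unfolding m_def using assms(3) by simp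
  have avg: "avg_price (nth_smallest B) n = 2 * sum_mset B / m"
    unfolding avg_price_def m_def using sum_nth_smallest[of B] assms(2) by simp
  have "sum_list (map (nth_smallest B) xs) \<le> real (sum_list xs) * (2 * sum_mset B / m)"
    using assms(1) unfolding cheap_def avg by simp
  also have "\<dots> < R * m / 2 * (2 * sum_mset B / m)"
    using assms(4,5) m unfolding m_def by (intro mult_strict_right_mono) auto
  also have "\<dots> = R * sum_mset B"
    using m by (simp add: field_simps)
  finally show ?thesis .
qed

theorem lemma6:
  fixes n :: nat and R \<beta> :: real and BD :: "real multiset"
  assumes "n \<ge> 1" and "\<beta> > 0"
    and "2 / (real n + 1) < R" and "R \<le> 1"
    and "size BD = n" and "\<forall>x\<in>#BD. 0 \<le> x" and "sum_mset BD = \<beta>"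
  shows "W n R \<beta> pi_unif BD \<ge> f n R (min n (nat \<lfloor>real n / R\<rfloor>))"
proof -
  define k where "k = nat (\<lceil>R * (real n * (real n + 1)) / 2\<rceil> - 1)"
  have "0 < 2 / (real n + 1)" by simp
  with assms(3) have R: "0 < R" by linarith
  have n: "n \<ge> 2" using assms(1,3,4) by (cases "n = 1") auto
  note k = triangular_ceiling_bounds[OF assms(1,3,4), folded k_def]
  obtain xs where xs: "cheap (nth_smallest BD) n xs" "sum_list xs = k" "length xs \<le> n"
    using exists_cheap_list[of "nth_smallest BD"] n k by auto
  have cost: "sum_list (map (nth_smallest BD) xs) < R * \<beta>"
    using cheap_nth_smallest_cost_less[OF xs(1) assms(5,1)] assms(2,7) k(2) xs(2) by simp
  have "set xs \<subseteq> {..n}" using xs(1) unfolding cheap_def by simp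
  then obtain BA where BA: "valid_bid_set n (R * \<beta>) BA"
    "real k / n \<le> w n (\<lambda>ys. return_pmf ys) pi_unif BA BD"
    using exists_bid_set_winning[OF assms(5,6) _ xs(3) cost] xs(2) by blast
  have "w n (\<lambda>ys. return_pmf ys) pi_unif BA BD \<le> W n R \<beta> pi_unif BD"
    using BA(1) by (intro w_le_W) (simp_all add: valid_perm_alg_def)
  then show ?thesis
    using BA(2) f_eq_ceiling[OF assms(1) R assms(4)] unfolding k_def by linarith
qed

end
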